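(* Let $f:[0,1]\times\mathbb{R}\rightarrow\mathbb{R}$ be continuous and consider the boundary value problem \[ x'''(t)+f(t,x(t))=0,\ t\in(0,1),\qquad x(0)=x(1)=x''(0)=0. \] Assume there exist $\xi:\mathbb{R}^{2}\rightarrow\mathbb{R}$ and $\varphi\in\Phi$ such that: (J1) there exists $N\in\mathbb{N}\setminus\{0\}$ such that for all $a_{0},\dots,a_{N+1}\in\mathbb{R}$ with $\xi(a_{i},a_{i+1})\geq0$ for all $i\in\{0,\ldots,N\}$ one has $\xi(a_{0},a_{N+1})\geq0$; (J2) for all $a,b\in\mathbb{R}$, $\xi(a,b)\geq0$ implies $|f(t,a)-f(t,b)|\leq9\sqrt{3}\,\varphi(|a-b|)$ for all $t\in[0,1]$; (J3) for all $x,y\in C([0,1])$, if $\xi(x(t),y(t))\geq0$ for all $t\in[0,1]$ then $\xi\big((Tx)(t),(Ty)(t)\big)\geq0$ for all $t\in[0,1]$; (J4) there exists $x_{0}\in C([0,1])$ with $\xi\big(x_{0}(t),(Tx_{0})(t)\big)\geq0$ for all $t\in[0,1]$. Then the boundary value problem has a solution. If in addition (J5) for every $x,y\in C([0,1])$ there exist $z_{0},\ldots,z_{n}\in C([0,1])$ with $z_{0}=x$, $z_{n}=y$ and, for each $i\in\{1,\ldots,n\}$, either $\xi(z_{i-1}(t),z_{i}(t))\geq0$ for all $t\in[0,1]$ or $\xi(z_{i}(t),z_{i-1}(t))\geq0$ for all $t\in[0,1]$, then the solution is unique.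
   Context: $C([0,1])$ denotes real continuous functions on $[0,1]$. $G(t,s)=\frac12(1-t)(t-s^2)$ for $0\leq s\leq t\leq1$ and $G(t,s)=\frac12 t(1-s)^2$ for $0\leq t\leq s\leq1$; for $x\in C([0,1])$, $(Tx)(t)=\int_0^1G(t,s)f(s,x(s))\,\mathrm{d}s$. (The boundary value problem is equivalent to the integral equation $x=Tx$ in $C([0,1])$.) $\Phi$ is the set of all nondecreasing functions $\varphi:[0,+\infty)\rightarrow[0,+\infty)$ such that for every $\varepsilon>0$ there exists $\delta(\varepsilon)>0$ with $\varepsilon\leq t<\varepsilon+\delta(\varepsilon)\Rightarrow\varphi(t)<\varepsilon$. *)

theory Defs
  imports "HOL-Analysis.Analysis"
begin

definition G :: "real \<Rightarrow> real \<Rightarrow> real" where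
  "G t s = (if s \<le> t then (1/2) * (1 - t) * (t - s^2) else (1/2) * t * (1 - s)^2)"

text \<open>The integral operator T; elements of C([0,1]) are functions continuous on [0,1].\<close>
definition Top :: "(real \<Rightarrow> real \<Rightarrow> real) \<Rightarrow> (real \<Rightarrow> real) \<Rightarrow> real \<Rightarrow> real" where
  "Top f x t = integral {0..1} (\<lambda>s. G t s * f s (x s))"

definition PhiClass :: "(real \<Rightarrow> real) set" where
  "PhiClass = {\<phi>. (\<forall>t\<ge>0. \<phi> t \<ge> 0) \<and> mono_on {0..} \<phi> \<and>
      (\<forall>\<epsilon>>0. \<exists>\<delta>>0. \<forall>t. \<epsilon> \<le> t \<and> t < \<epsilon> + \<delta> \<longrightarrow> \<phi> t < \<epsilon>)}"

text \<open>Classical solution of x''' + f(t,x) = 0 on (0,1), x(0)=x(1)=x''(0)=0: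
  x \<in> C^2[0,1] (one-sided derivatives at the endpoints), x'' differentiable on (0,1).\<close>
definition bvp_solution :: "(real \<Rightarrow> real \<Rightarrow> real) \<Rightarrow> (real \<Rightarrow> real) \<Rightarrow> bool" where
  "bvp_solution f x \<longleftrightarrow> (\<exists>x1 x2 x3.
      (\<forall>t\<in>{0..1}. (x has_real_derivative x1 t) (at t within {0..1})) \<and>
      (\<forall>t\<in>{0..1}. (x1 has_real_derivative x2 t) (at t within {0..1})) \<and>
      continuous_on {0..1} x2 \<and>
      (\<forall>t\<in>{0<..<1}. (x2 has_real_derivative x3 t) (at t)) \<and>
      (\<forall>t\<in>{0<..<1}. x3 t + f t (x t) = 0) \<and>
      x 0 = 0 \<and> x 1 = 0 \<and> x2 0 = 0)"

end

theory Submission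
  imports Defs
begin

text \<open>
  The Green's function inverts \<open>x''' = -g\<close> under the boundary conditions, so the solutions
  of the problem are exactly the continuous fixed points of \<open>T\<close>. Since \<open>G \<ge> 0\<close> and
  \<open>\<integral>\<^sub>0\<^sup>1 G(t,s) ds = (t - t\<^sup>3)/6 \<le> 1/(9 sqrt 3)\<close>, hypothesis (J2) makes \<open>T\<close> a
  \<open>\<phi>\<close>-contraction in the sup norm on pairs of functions that are pointwise \<open>\<xi>\<close>-related.
  By (J3) and (J4) consecutive Picard iterates \<open>x\<^sub>n = T\<^sup>n x\<^sub>0\<close> are related, and (J1) relates
  \<open>x\<^sub>a\<close> to every \<open>x\<^bsub>a+1+kN\<^esub>\<close>. Contraction along these pairs, together with
  \<open>\<phi> t < \<epsilon>\<close> for \<open>t\<close> just above \<open>\<epsilon>\<close>, keeps all later iterates within about \<open>\<epsilon>\<close> of \<open>x\<^sub>a\<close>,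
  so the iterates converge uniformly to a fixed point. For uniqueness, (J5) joins two fixed
  points by a chain of related functions, and \<open>T\<^sup>k\<close> shrinks every link to \<open>0\<close> since
  \<open>\<phi>\<^sup>k c \<longlonglongrightarrow> 0\<close>.
\<close>

section \<open>Green's operator\<close>

definition green_op :: "(real \<Rightarrow> real) \<Rightarrow> real \<Rightarrow> real" where
  "green_op g t = integral {0..1} (\<lambda>s. G t s * g s)"

lemma Top_eq_green_op: "Top f x = green_op (\<lambda>s. f s (x s))"
  by (simp add: fun_eq_iff Top_def green_op_def)

lemma G_eq: "G t s = t * (1 - s)^2 / 2 - (max (t - s) 0)^2 / 2"
  by (auto simp: G_def max_def power2_eq_square field_simps)

lemma G_nonneg:
  assumes "t \<in> {0..1}" "s \<in> {0..1}"
  shows "0 \<le> G t s"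
proof (cases "s \<le> t")
  case True
  with assms have "s^2 \<le> t" by (metis atLeastAtMost_iff mult_left_le_one_le order_trans power2_eq_square)
  with True assms show ?thesis by (simp add: G_def)
qed (use assms in \<open>simp add: G_def\<close>)

lemma green_op_at_0: "green_op g 0 = 0"
  and green_op_at_1: "green_op g 1 = 0"
  unfolding green_op_def by (subst integral_cong[where g = "\<lambda>_. 0"]; simp add: G_def)+

lemma integrable_G_mult:
  "continuous_on {0..1} g \<Longrightarrow> (\<lambda>s. G t s * g s) integrable_on {0..1}"
  unfolding G_eq by (intro integrable_continuous_interval continuous_intros) auto

lemma green_op_diff:
  assumes "continuous_on {0..1} g" "continuous_on {0..1} h"
  shows "green_op g t - green_op h t = green_op (\<lambda>s. g s - h s) t"
  unfolding green_op_def right_diff_distrib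
  by (rule integral_diff[symmetric]) (use assms integrable_G_mult in auto)

lemma green_op_eq_primitives:
  assumes g: "continuous_on {0..1} g" and t: "t \<in> {0..1}"
  shows "green_op g t = t * integral {0..1} (\<lambda>s. (1 - s)^2 * g s) / 2
     - (t^2 * integral {0..t} g - 2 * t * integral {0..t} (\<lambda>s. s * g s)
        + integral {0..t} (\<lambda>s. s^2 * g s)) / 2"
proof -
  have g_t: "continuous_on {0..t} g" using g t by (auto intro: continuous_on_subset)
  have "green_op g t = t / 2 * integral {0..1} (\<lambda>s. (1 - s)^2 * g s)
      - integral {0..1} (\<lambda>s. (max (t - s) 0)^2 * g s) / 2"
    unfolding green_op_def G_eq diff_divide_distrib left_diff_distrib
    by (subst integral_diff; (subst integral_divide)?; (subst integral_mult_left)?)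
       (auto intro!: integrable_continuous_interval continuous_intros g simp: algebra_simps)
  also have "integral {0..1} (\<lambda>s. (max (t - s) 0)^2 * g s)
      = integral {0..t} (\<lambda>s. (max (t - s) 0)^2 * g s)"
  proof -
    let ?h = "\<lambda>s. (max (t - s) 0)^2 * g s"
    have "integral {0..t} ?h + integral {t..1} ?h = integral {0..1} ?h"
      using t by (intro Henstock_Kurzweil_Integration.integral_combine
          integrable_continuous_interval continuous_intros g) auto
    moreover have "integral {t..1} ?h = 0"
      by (subst integral_cong[where g = "\<lambda>_. 0"]) auto
    ultimately show ?thesis by simp
  qed
  also have "\<dots> = integral {0..t} (\<lambda>s. t^2 * g s - 2 * t * (s * g s) + s^2 * g s)"
    by (rule integral_cong) (auto simp: power2_eq_square algebra_simps)
  also have "\<dots> = t^2 * integral {0..t} g - 2 * t * integral {0..t} (\<lambda>s. s * g s)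
      + integral {0..t} (\<lambda>s. s^2 * g s)"
  proof -
    have "g integrable_on {0..t}" "(\<lambda>s. s * g s) integrable_on {0..t}"
        "(\<lambda>s. s^2 * g s) integrable_on {0..t}"
      by (intro integrable_continuous_interval continuous_intros g_t)+
    then show ?thesis
      by (intro integral_unique has_integral_add has_integral_diff has_integral_mult_right
          integrable_integral)
  qed
  finally show ?thesis by (simp add: field_simps)
qed

lemma green_op_derivatives:
  assumes g: "continuous_on {0..1} g"
  obtains u' u'' where
    "\<And>t. t \<in> {0..1} \<Longrightarrow> (green_op g has_real_derivative u' t) (at t within {0..1})"
    "\<And>t. t \<in> {0..1} \<Longrightarrow> (u' has_real_derivative u'' t) (at t within {0..1})"
    "\<And>t. t \<in> {0..1} \<Longrightarrow> (u'' has_real_derivative - g t) (at t within {0..1})"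
    "u'' 0 = 0"
proof -
  define K where "K = integral {0..1} (\<lambda>s. (1 - s)^2 * g s)"
  define A where "A u = integral {0..u} g" for u
  define B1 where "B1 u = integral {0..u} (\<lambda>s. s * g s)" for u
  define B2 where "B2 u = integral {0..u} (\<lambda>s. s^2 * g s)" for u
  have dA: "(A has_real_derivative g t) (at t within {0..1})" if t: "t \<in> {0..1}" for t
    unfolding A_def by (rule integral_has_real_derivative[OF g t])
  have dB1: "(B1 has_real_derivative t * g t) (at t within {0..1})" if t: "t \<in> {0..1}" for t
    unfolding B1_def by (intro integral_has_real_derivative[OF _ t] continuous_intros g)
  have dB2: "(B2 has_real_derivative t^2 * g t) (at t within {0..1})" if t: "t \<in> {0..1}" for t
    unfolding B2_def by (intro integral_has_real_derivative[OF _ t] continuous_intros g)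
  show ?thesis
  proof (rule that)
    fix t :: real assume t: "t \<in> {0..1}"
    note derivs = dA[OF t] dB1[OF t] dB2[OF t]
    have "((\<lambda>u. u * K / 2 - (u^2 * A u - 2 * u * B1 u + B2 u) / 2) has_real_derivative
        K / 2 - t * A t + B1 t) (at t within {0..1})"
      by (rule derivative_eq_intros derivs refl | simp)+ (simp add: field_simps power2_eq_square)
    then show "(green_op g has_real_derivative K / 2 - t * A t + B1 t) (at t within {0..1})"
      by (rule has_field_derivative_transform_within[OF _ zero_less_one t])
        (simp add: green_op_eq_primitives[OF g] K_def A_def B1_def B2_def)
    show "((\<lambda>u. K / 2 - u * A u + B1 u) has_real_derivative - A t) (at t within {0..1})"
      by (rule derivative_eq_intros derivs refl | simp)+
    show "((\<lambda>u. - A u) has_real_derivative - g t) (at t within {0..1})"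
      by (rule derivative_eq_intros derivs refl)+
  qed (simp add: A_def)
qed

lemma continuous_on_green_op: "continuous_on {0..1} g \<Longrightarrow> continuous_on {0..1} (green_op g)"
  by (metis DERIV_continuous_on green_op_derivatives)

lemma homogeneous_bvp_solution_eq_0:
  fixes w w' w'' :: "real \<Rightarrow> real"
  assumes d1: "\<And>t. t \<in> {0..1} \<Longrightarrow> (w has_real_derivative w' t) (at t within {0..1})"
    and d2: "\<And>t. t \<in> {0..1} \<Longrightarrow> (w' has_real_derivative w'' t) (at t within {0..1})"
    and c2: "continuous_on {0..1} w''"
    and d3: "\<And>t. t \<in> {0<..<1} \<Longrightarrow> (w'' has_real_derivative 0) (at t)"
    and bc: "w 0 = 0" "w 1 = 0" "w'' 0 = 0"
    and t: "t \<in> {0..1}"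
  shows "w t = 0"
proof -
  have w''_eq_0: "w'' s = 0" if s: "s \<in> {0..1}" for s
  proof (cases "s = 0")
    case False
    then have "w'' s = w'' 0"
      using s by (intro DERIV_isconst_end continuous_on_subset[OF c2] d3) auto
    with bc show ?thesis by simp
  qed (use bc in simp)
  obtain c where c: "\<forall>s\<in>{0..1}. w' s = c"
    using has_field_derivative_zero_constant[of "{0..1}" w'] d2 w''_eq_0 by force
  have "\<exists>d. \<forall>s\<in>{0..1}. w s - c * s = d"
  proof (rule has_field_derivative_zero_constant)
    fix s :: real assume s: "s \<in> {0..1}"
    have "((\<lambda>s. w s - c * s) has_real_derivative w' s - c) (at s within {0..1})"
      by (auto intro!: derivative_eq_intros d1 s)
    with c s show "((\<lambda>s. w s - c * s) has_real_derivative 0) (at s within {0..1})" by simp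
  qed simp
  then obtain d where d: "\<forall>s\<in>{0..1}. w s - c * s = d" by blast
  from d[rule_format, of 0] d[rule_format, of 1] bc have "d = 0" "c = 0" by auto
  with d t show ?thesis by auto
qed

lemma green_op_unique:
  assumes g: "continuous_on {0..1} g"
    and d1: "\<And>t. t \<in> {0..1} \<Longrightarrow> (u has_real_derivative u' t) (at t within {0..1})"
    and d2: "\<And>t. t \<in> {0..1} \<Longrightarrow> (u' has_real_derivative u'' t) (at t within {0..1})"
    and c2: "continuous_on {0..1} u''"
    and d3: "\<And>t. t \<in> {0<..<1} \<Longrightarrow> (u'' has_real_derivative - g t) (at t)"
    and bc: "u 0 = 0" "u 1 = 0" "u'' 0 = 0"
    and t: "t \<in> {0..1}"
  shows "u t = green_op g t"
proof -
  obtain v' v'' where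
    e1: "\<And>t. t \<in> {0..1} \<Longrightarrow> (green_op g has_real_derivative v' t) (at t within {0..1})" and
    e2: "\<And>t. t \<in> {0..1} \<Longrightarrow> (v' has_real_derivative v'' t) (at t within {0..1})" and
    e3: "\<And>t. t \<in> {0..1} \<Longrightarrow> (v'' has_real_derivative - g t) (at t within {0..1})" and
    "v'' 0 = 0"
    using green_op_derivatives[OF g] by blast
  have "u t - green_op g t = 0"
  proof (rule homogeneous_bvp_solution_eq_0[where w = "\<lambda>t. u t - green_op g t" and t = t
        and w' = "\<lambda>t. u' t - v' t" and w'' = "\<lambda>t. u'' t - v'' t"])
    show "continuous_on {0..1} (\<lambda>t. u'' t - v'' t)"
      using c2 DERIV_continuous_on[OF e3] by (intro continuous_intros)
    fix s :: real
    assume s: "s \<in> {0<..<1}"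
    then have "(v'' has_real_derivative - g s) (at s)"
      using e3[of s] at_within_Icc_at[of 0 s 1] by auto
    then show "((\<lambda>t. u'' t - v'' t) has_real_derivative 0) (at s)"
      using d3[OF s] by (auto intro: derivative_eq_intros)
  qed (use d1 d2 e1 e2 bc \<open>v'' 0 = 0\<close> green_op_at_0 green_op_at_1 t in
       \<open>auto intro!: derivative_intros\<close>)
  then show ?thesis by simp
qed

lemma green_op_const_1:
  assumes "t \<in> {0..1}"
  shows "green_op (\<lambda>_. 1) t = (t - t^3) / 6"
  by (rule green_op_unique[where u' = "\<lambda>t. (1 - 3 * t^2) / 6" and u'' = "\<lambda>t. - t", symmetric])
    (use assms in \<open>auto intro!: derivative_eq_intros continuous_intros simp: power2_eq_square\<close>)

text \<open>Equality holds at \<open>t = 1 / sqrt 3\<close>: this is where the constant \<open>9 * sqrt 3\<close> comes from.\<close>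
lemma cubic_bound:
  fixes t :: real
  assumes "0 \<le> t"
  shows "9 * sqrt 3 * (t - t^3) \<le> 6"
proof -
  define r where "r = sqrt 3"
  have "r^2 = 3" "0 \<le> r" by (simp_all add: r_def)
  then have "6 - 9 * r * (t - t^3) = 3 * (r * t - 1)^2 * (r * t + 2)"
    by (simp add: algebra_simps power2_eq_square power3_eq_cube)
  also have "\<dots> \<ge> 0" using assms \<open>0 \<le> r\<close> by simp
  finally show ?thesis by (simp add: r_def)
qed

lemma green_op_bound:
  assumes g: "continuous_on {0..1} g" and M: "\<And>s. s \<in> {0..1} \<Longrightarrow> \<bar>g s\<bar> \<le> M"
    and t: "t \<in> {0..1}"
  shows "9 * sqrt 3 * \<bar>green_op g t\<bar> \<le> M"
proof -
  have "M \<ge> 0" using M[of 0] by simp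
  have "\<bar>green_op g t\<bar> \<le> integral {0..1} (\<lambda>s. G t s * 1 * M)"
    unfolding green_op_def real_norm_def[symmetric]
  proof (rule integral_norm_bound_integral)
    show "(\<lambda>s. G t s * 1 * M) integrable_on {0..1}"
      using integrable_G_mult[of "\<lambda>_. 1" t] by (simp add: integrable_on_mult_left)
    fix s :: real assume "s \<in> {0..1}"
    with G_nonneg[OF t] M show "norm (G t s * g s) \<le> G t s * 1 * M"
      by (simp add: abs_mult mult_left_mono)
  qed (use integrable_G_mult[OF g] in blast)
  also have "\<dots> = (t - t^3) / 6 * M"
    using green_op_const_1[OF t] by (simp add: green_op_def)
  finally have "9 * sqrt 3 * \<bar>green_op g t\<bar> \<le> 9 * sqrt 3 * ((t - t^3) / 6 * M)"
    by (rule mult_left_mono) simp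
  also have "\<dots> = (9 * sqrt 3 * (t - t^3)) / 6 * M" by simp
  also have "\<dots> \<le> M"
    using mult_right_mono[OF cubic_bound \<open>M \<ge> 0\<close>, of t] t by (simp add: mult_ac)
  finally show ?thesis .
qed

lemma green_op_tendsto:
  assumes lim: "uniform_limit {0..1} g h sequentially"
    and g: "\<And>n. continuous_on {0..1} (g n)" and h: "continuous_on {0..1} h"
    and t: "t \<in> {0..1}"
  shows "(\<lambda>n. green_op (g n) t) \<longlonglongrightarrow> green_op h t"
  unfolding tendsto_iff
proof (intro allI impI)
  fix \<epsilon> :: real assume "\<epsilon> > 0"
  then have "\<epsilon> / 2 > 0" by simp
  with lim have "\<forall>\<^sub>F n in sequentially. \<forall>s\<in>{0..1}. dist (g n s) (h s) < \<epsilon> / 2"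
    unfolding uniform_limit_iff by blast
  then show "\<forall>\<^sub>F n in sequentially. dist (green_op (g n) t) (green_op h t) < \<epsilon>"
  proof eventually_elim
    case (elim n)
    have "1 * \<bar>green_op (\<lambda>s. g n s - h s) t\<bar> \<le> 9 * sqrt 3 * \<bar>green_op (\<lambda>s. g n s - h s) t\<bar>"
      by (intro mult_right_mono) (auto simp: order_trans[OF real_sqrt_ge_one[of 3]])
    also have "\<dots> \<le> \<epsilon> / 2"
      using elim by (intro green_op_bound continuous_intros g h t) (auto simp: dist_real_def less_imp_le)
    finally show ?case
      using \<open>\<epsilon> > 0\<close> green_op_diff[OF g h, of n t] by (simp add: dist_real_def)
  qed
qed

section \<open>The class \<open>\<Phi>\<close>\<close>

lemma PhiClass_nonneg: "\<phi> \<in> PhiClass \<Longrightarrow> 0 \<le> t \<Longrightarrow> 0 \<le> \<phi> t"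
  unfolding PhiClass_def by blast

lemma PhiClass_mono:
  assumes "\<phi> \<in> PhiClass" and "0 \<le> s" "s \<le> t"
  shows "\<phi> s \<le> \<phi> t"
proof -
  from assms(1) have "mono_on {0..} \<phi>" by (simp add: PhiClass_def)
  then show ?thesis by (rule mono_onD) (use assms in auto)
qed

lemma PhiClass_less_self:
  assumes "\<phi> \<in> PhiClass" and "0 < t"
  shows "\<phi> t < t"
proof -
  obtain \<delta> where "\<delta> > 0" "\<forall>s. t \<le> s \<and> s < t + \<delta> \<longrightarrow> \<phi> s < t"
    using assms unfolding PhiClass_def by blast
  then show ?thesis by simp
qed

lemma PhiClass_le_self:
  assumes phi: "\<phi> \<in> PhiClass" and "0 \<le> t"
  shows "\<phi> t \<le> t"
proof (cases "t = 0")
  case True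
  have "\<phi> 0 \<le> s" if "0 < s" for s
    using PhiClass_mono[OF phi, of 0 s] PhiClass_less_self[OF phi that] that by linarith
  with True show ?thesis
    using field_le_epsilon[of "\<phi> 0" 0] by simp
qed (use PhiClass_less_self[OF phi, of t] assms in auto)

lemma PhiClass_funpow_tendsto_0:
  assumes phi: "\<phi> \<in> PhiClass" and "0 \<le> c"
  shows "(\<lambda>n. (\<phi> ^^ n) c) \<longlonglongrightarrow> 0"
proof -
  define X where "X n = (\<phi> ^^ n) c" for n
  have X_nonneg: "0 \<le> X n" for n
    unfolding X_def by (induction n) (auto simp: \<open>0 \<le> c\<close> PhiClass_nonneg[OF phi])
  have "decseq X"
    unfolding decseq_Suc_iff X_def using X_nonneg PhiClass_le_self[OF phi] by (simp add: X_def)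
  then obtain L where L: "X \<longlonglongrightarrow> L" "\<And>n. L \<le> X n"
    using decseq_convergent[of X 0] X_nonneg by blast
  have "L = 0"
  proof (rule ccontr)
    assume "L \<noteq> 0"
    moreover have "0 \<le> L" using LIMSEQ_le_const[OF L(1)] X_nonneg by blast
    ultimately have "L > 0" by simp
    then obtain \<delta> where "\<delta> > 0" and \<delta>: "\<And>t. L \<le> t \<Longrightarrow> t < L + \<delta> \<Longrightarrow> \<phi> t < L"
      using phi unfolding PhiClass_def by blast
    obtain n where "norm (X n - L) < \<delta>"
      using LIMSEQ_D[OF L(1) \<open>\<delta> > 0\<close>] by blast
    then have "X n < L + \<delta>" by simp
    then have "X (Suc n) < L" using \<delta>[OF L(2)] by (simp add: X_def)
    with L(2) show False by (simp add: not_le[symmetric])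
  qed
  with L show ?thesis by (simp add: X_def[abs_def])
qed

section \<open>Uniformly Cauchy sequences from block contractions\<close>

lemma related_along_blocks:
  fixes R :: "'a \<Rightarrow> 'a \<Rightarrow> bool" and b :: "nat \<Rightarrow> 'a"
  assumes chain: "\<And>a. (\<forall>i\<le>N. R (a i) (a (Suc i))) \<Longrightarrow> R (a 0) (a (N + 1))"
    and step: "\<And>i. R (b i) (b (Suc i))"
  shows "R (b n) (b (n + 1 + k * N))"
proof (induction k)
  case 0
  show ?case using step[of n] by simp
next
  case (Suc k)
  define a where "a i = (if i = 0 then b n else b (n + k * N + i))" for i
  have "\<forall>i\<le>N. R (a i) (a (Suc i))"
    using Suc.IH step by (auto simp: a_def algebra_simps)
  then have "R (a 0) (a (N + 1))" by (rule chain)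
  then show ?case by (simp add: a_def algebra_simps)
qed

lemma dist_le_steps:
  fixes x :: "nat \<Rightarrow> 'a::metric_space"
  assumes "\<And>m. a \<le> m \<Longrightarrow> dist (x m) (x (Suc m)) \<le> \<eta>"
  shows "dist (x a) (x (a + r)) \<le> r * \<eta>"
proof (induction r)
  case (Suc r)
  have "dist (x a) (x (a + Suc r)) \<le> dist (x a) (x (a + r)) + dist (x (a + r)) (x (Suc (a + r)))"
    by (simp add: dist_triangle)
  also have "\<dots> \<le> r * \<eta> + \<eta>" using Suc.IH assms[of "a + r"] by simp
  finally show ?case by (simp add: algebra_simps)
qed simp

lemma dist_le_along_blocks:
  fixes X :: "nat \<Rightarrow> 'a \<Rightarrow> 'b::metric_space"
  assumes N: "N \<ge> 1"
    and block: "\<And>k a c. \<forall>s\<in>S. dist (X a s) (X (a + 1 + k * N) s) \<le> c \<Longrightarrow>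
        \<forall>s\<in>S. dist (X (Suc a) s) (X (a + 2 + k * N) s) \<le> \<phi> c"
    and near: "\<And>a r s. n0 \<le> a \<Longrightarrow> r \<le> N \<Longrightarrow> s \<in> S \<Longrightarrow> dist (X a s) (X (a + r) s) \<le> \<rho>"
    and phi_bound: "\<phi> (\<epsilon> + \<rho>) \<le> \<epsilon>" and "0 \<le> \<epsilon>"
  shows "n0 \<le> a \<Longrightarrow> t \<in> S \<Longrightarrow> dist (X a t) (X (a + 1 + k * N) t) \<le> \<epsilon> + \<rho>"
proof (induction k arbitrary: a t)
  case 0
  then show ?case using near[of a 1 t] N \<open>0 \<le> \<epsilon>\<close> by simp
next
  case (Suc k)
  define b where "b = a + N - 1"
  have "n0 \<le> b" using Suc.prems N by (simp add: b_def)
  then have "\<forall>s\<in>S. dist (X b s) (X (b + 1 + k * N) s) \<le> \<epsilon> + \<rho>" using Suc.IH by blast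
  then have "dist (X (Suc b) t) (X (b + 2 + k * N) t) \<le> \<epsilon>"
    using block phi_bound Suc.prems(2) by (meson order_trans)
  moreover have "Suc b = a + N" "b + 2 + k * N = a + 1 + Suc k * N" using N by (simp_all add: b_def)
  moreover have "dist (X a t) (X (a + N) t) \<le> \<rho>" using near Suc.prems by blast
  ultimately show ?case
    using dist_triangle[of "X a t" "X (a + 1 + Suc k * N) t" "X (a + N) t"]
    by (simp add: add.assoc)
qed

lemma uniformly_Cauchy_on_if_block_contractive:
  fixes X :: "nat \<Rightarrow> 'a \<Rightarrow> 'b::metric_space"
  assumes N: "N \<ge> 1" and phi: "\<phi> \<in> PhiClass"
    and step: "\<And>n t. t \<in> S \<Longrightarrow> dist (X n t) (X (Suc n) t) \<le> e n" and e: "e \<longlonglongrightarrow> 0"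
    and block: "\<And>k a c. \<forall>s\<in>S. dist (X a s) (X (a + 1 + k * N) s) \<le> c \<Longrightarrow>
        \<forall>s\<in>S. dist (X (Suc a) s) (X (a + 2 + k * N) s) \<le> \<phi> c"
  shows "uniformly_Cauchy_on S X"
  unfolding uniformly_Cauchy_on_def
proof (intro allI impI)
  fix \<epsilon> :: real assume "\<epsilon> > 0"
  then have "\<epsilon> / 3 > 0" by simp
  then obtain \<delta> where "\<delta> > 0" and \<delta>: "\<And>t. \<epsilon> / 3 \<le> t \<Longrightarrow> t < \<epsilon> / 3 + \<delta> \<Longrightarrow> \<phi> t < \<epsilon> / 3"
    using phi unfolding PhiClass_def by blast
  define \<rho> where "\<rho> = min \<delta> (\<epsilon> / 3) / 2"
  have \<rho>: "0 < \<rho>" "\<rho> < \<delta>" "\<rho> \<le> \<epsilon> / 6"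
    using \<open>\<delta> > 0\<close> \<open>\<epsilon> > 0\<close> by (auto simp: \<rho>_def)
  have "\<rho> / N > 0" using \<rho>(1) N by simp
  then obtain n0 where "\<forall>m\<ge>n0. norm (e m - 0) < \<rho> / N"
    using LIMSEQ_D[OF e] by blast
  then have n0: "e m \<le> \<rho> / N" if "n0 \<le> m" for m
    using that by fastforce
  have near: "dist (X a s) (X (a + r) s) \<le> \<rho>" if "n0 \<le> a" "r \<le> N" "s \<in> S" for a r s
  proof -
    have "dist (X a s) (X (a + r) s) \<le> r * (\<rho> / N)"
    proof (rule dist_le_steps)
      fix m assume "a \<le> m"
      then show "dist (X m s) (X (Suc m) s) \<le> \<rho> / N"
        using step[OF \<open>s \<in> S\<close>, of m] n0[of m] \<open>n0 \<le> a\<close> by simp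
    qed
    also have "\<dots> \<le> N * (\<rho> / N)" using that \<rho>(1) by (intro mult_right_mono) auto
    finally show ?thesis using N by simp
  qed
  have far: "dist (X a t) (X (a + 1 + k * N) t) \<le> \<epsilon> / 3 + \<rho>" if "n0 \<le> a" "t \<in> S" for a k t
    using dist_le_along_blocks[OF N block near _ _ that] \<delta>[of "\<epsilon> / 3 + \<rho>"] \<rho> \<open>\<epsilon> > 0\<close> by simp
  have ordered: "dist (X n t) (X m t) < \<epsilon>" if "n0 \<le> n" "n < m" "t \<in> S" for n m t
  proof -
    define k where "k = (m - n - 1) div N"
    define r where "r = (m - n - 1) mod N"
    have "m = n + 1 + k * N + r" "r \<le> N"
      using that N by (auto simp: k_def r_def less_imp_le)
    then have "dist (X n t) (X m t) \<le> (\<epsilon> / 3 + \<rho>) + \<rho>"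
      using dist_triangle[of "X n t" "X m t" "X (n + 1 + k * N) t"] far[of n t k]
        near[of "n + 1 + k * N" r t] that by simp
    with \<rho> \<open>\<epsilon> > 0\<close> show ?thesis by simp
  qed
  have "dist (X m t) (X n t) < \<epsilon>" if "n0 \<le> m" "n0 \<le> n" "t \<in> S" for m n t
    using that \<open>\<epsilon> > 0\<close> ordered[of m n t] ordered[of n m t]
    by (cases m n rule: linorder_cases) (auto simp: dist_commute)
  then show "\<exists>M. \<forall>t\<in>S. \<forall>m\<ge>M. \<forall>n\<ge>M. dist (X m t) (X n t) < \<epsilon>" by blast
qed

section \<open>The integral operator \<open>T\<close>\<close>

lemma uniform_limit_compose_continuous:
  fixes f :: "'a::metric_space \<Rightarrow> real \<Rightarrow> 'c::metric_space"
  assumes f: "continuous_on (S \<times> UNIV) (\<lambda>(t, u). f t u)" and S: "compact S"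
    and lim: "uniform_limit S X l sequentially" and l: "continuous_on S l"
  shows "uniform_limit S (\<lambda>n s. f s (X n s)) (\<lambda>s. f s (l s)) sequentially"
  unfolding uniform_limit_iff
proof (intro allI impI)
  fix \<epsilon> :: real assume "\<epsilon> > 0"
  obtain B where B: "\<And>s. s \<in> S \<Longrightarrow> \<bar>l s\<bar> \<le> B"
    using compact_imp_bounded[OF compact_continuous_image[OF l S]] by (auto simp: bounded_iff)
  define K where "K = S \<times> {-B - 1..B + 1}"
  have "uniformly_continuous_on K (\<lambda>(t, u). f t u)"
    using f S unfolding K_def
    by (intro compact_uniformly_continuous compact_Times compact_Icc)
      (auto intro: continuous_on_subset)
  then obtain d where "d > 0"
    and d: "\<And>p q. p \<in> K \<Longrightarrow> q \<in> K \<Longrightarrow> dist q p < d \<Longrightarrow>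
      dist ((\<lambda>(t, u). f t u) q) ((\<lambda>(t, u). f t u) p) < \<epsilon>"
    using \<open>\<epsilon> > 0\<close> unfolding uniformly_continuous_on_def by metis
  have "min d 1 > 0" using \<open>d > 0\<close> by simp
  with lim have "\<forall>\<^sub>F n in sequentially. \<forall>s\<in>S. dist (X n s) (l s) < min d 1"
    unfolding uniform_limit_iff by blast
  then show "\<forall>\<^sub>F n in sequentially. \<forall>s\<in>S. dist (f s (X n s)) (f s (l s)) < \<epsilon>"
  proof (rule eventually_mono, intro ballI)
    fix n s assume close: "\<forall>s\<in>S. dist (X n s) (l s) < min d 1" and "s \<in> S"
    then have "(s, l s) \<in> K" "(s, X n s) \<in> K" "dist (s, X n s) (s, l s) < d"
      using B[of s] close by (auto simp: K_def dist_Pair_Pair dist_real_def abs_le_iff)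
    then show "dist (f s (X n s)) (f s (l s)) < \<epsilon>" using d by fastforce
  qed
qed

definition xi_related ::
    "(real \<Rightarrow> real \<Rightarrow> real) \<Rightarrow> (real \<Rightarrow> real) \<Rightarrow> (real \<Rightarrow> real) \<Rightarrow> bool" where
  "xi_related \<xi> x y \<longleftrightarrow> (\<forall>t\<in>{0..1}. \<xi> (x t) (y t) \<ge> 0)"

lemma Top_cong: "(\<And>s. s \<in> {0..1} \<Longrightarrow> x s = y s) \<Longrightarrow> Top f x t = Top f y t"
  unfolding Top_def by (rule integral_cong) simp

lemma Top_funpow_fixed_point:
  assumes "\<forall>s\<in>{0..1}. Top f x s = x s" and "t \<in> {0..1}"
  shows "(Top f ^^ n) x t = x t"
  using assms(2)
proof (induction n arbitrary: t)
  case (Suc n)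
  then have "Top f ((Top f ^^ n) x) t = Top f x t" by (intro Top_cong) simp
  with Suc assms(1) show ?case by simp
qed simp

locale continuous_bvp =
  fixes f :: "real \<Rightarrow> real \<Rightarrow> real"
  assumes f_cont: "continuous_on ({0..1} \<times> UNIV) (\<lambda>(t, u). f t u)"
begin

lemma continuous_on_compose_f:
  assumes "continuous_on {0..1} x"
  shows "continuous_on {0..1} (\<lambda>s. f s (x s))"
proof -
  have "continuous_on {0..1} (\<lambda>s. (\<lambda>(t, u). f t u) (s, x s))"
    by (rule continuous_on_compose2[OF f_cont]) (auto intro!: continuous_intros assms)
  then show ?thesis by simp
qed

lemma continuous_on_Top: "continuous_on {0..1} x \<Longrightarrow> continuous_on {0..1} (Top f x)"
  by (simp add: Top_eq_green_op continuous_on_green_op continuous_on_compose_f)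

lemma continuous_on_Top_funpow: "continuous_on {0..1} x \<Longrightarrow> continuous_on {0..1} ((Top f ^^ n) x)"
  by (induction n) (simp_all add: continuous_on_Top)

lemma bvp_solution_Top:
  assumes x: "continuous_on {0..1} x" and fixed: "\<forall>t\<in>{0..1}. Top f x t = x t"
  shows "bvp_solution f (Top f x)"
proof -
  define g where "g s = f s (x s)" for s
  have g: "continuous_on {0..1} g" unfolding g_def by (rule continuous_on_compose_f[OF x])
  obtain u' u'' where
    d1: "\<And>t. t \<in> {0..1} \<Longrightarrow> (green_op g has_real_derivative u' t) (at t within {0..1})" and
    d2: "\<And>t. t \<in> {0..1} \<Longrightarrow> (u' has_real_derivative u'' t) (at t within {0..1})" and
    d3: "\<And>t. t \<in> {0..1} \<Longrightarrow> (u'' has_real_derivative - g t) (at t within {0..1})" and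
    "u'' 0 = 0"
    using green_op_derivatives[OF g] by blast
  have "Top f x = green_op g" by (simp add: Top_eq_green_op g_def[abs_def])
  moreover have "(u'' has_real_derivative - g t) (at t)" if "t \<in> {0<..<1}" for t
    using d3[of t] that at_within_Icc_at[of 0 t 1] by auto
  moreover have "- g t + f t (green_op g t) = 0" if "t \<in> {0<..<1}" for t
    using fixed that \<open>Top f x = green_op g\<close> by (simp add: g_def)
  ultimately show ?thesis
    unfolding bvp_solution_def
    using d1 d2 DERIV_continuous_on[OF d3] \<open>u'' 0 = 0\<close> green_op_at_0 green_op_at_1
    by (intro exI[of _ u'] exI[of _ u''] exI[of _ "\<lambda>t. - g t"]) auto
qed

lemma fixed_point_if_bvp_solution:
  assumes "bvp_solution f x"
  shows "continuous_on {0..1} x" and "\<forall>t\<in>{0..1}. Top f x t = x t"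
proof -
  obtain x' x'' x''' where
    d1: "\<forall>t\<in>{0..1}. (x has_real_derivative x' t) (at t within {0..1})" and
    d2: "\<forall>t\<in>{0..1}. (x' has_real_derivative x'' t) (at t within {0..1})" and
    c2: "continuous_on {0..1} x''" and
    d3: "\<forall>t\<in>{0<..<1}. (x'' has_real_derivative x''' t) (at t)" and
    eq: "\<forall>t\<in>{0<..<1}. x''' t + f t (x t) = 0" and
    bc: "x 0 = 0" "x 1 = 0" "x'' 0 = 0"
    using assms unfolding bvp_solution_def by blast
  show x: "continuous_on {0..1} x" using DERIV_continuous_on d1 by blast
  have "x t = green_op (\<lambda>s. f s (x s)) t" if "t \<in> {0..1}" for t
  proof (rule green_op_unique[OF continuous_on_compose_f[OF x] _ _ c2 _ bc that])
    fix s :: real assume "s \<in> {0<..<1}"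
    with d3 eq show "(x'' has_real_derivative - f s (x s)) (at s)"
      by (metis add.commute add_eq_0_iff)
  qed (use d1 d2 in auto)
  then show "\<forall>t\<in>{0..1}. Top f x t = x t" by (simp add: Top_eq_green_op)
qed

lemma fixed_point_if_iterates_converge:
  assumes x0: "continuous_on {0..1} x0"
    and lim: "uniform_limit {0..1} (\<lambda>n. (Top f ^^ n) x0) x sequentially"
  shows "continuous_on {0..1} x" and "\<forall>t\<in>{0..1}. Top f x t = x t"
proof -
  show x: "continuous_on {0..1} x"
    using uniform_limit_theorem[OF _ lim] continuous_on_Top_funpow[OF x0] by simp
  show "\<forall>t\<in>{0..1}. Top f x t = x t"
  proof
    fix t :: real assume t: "t \<in> {0..1}"
    have "uniform_limit {0..1} (\<lambda>n s. f s ((Top f ^^ n) x0 s)) (\<lambda>s. f s (x s)) sequentially"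
      by (rule uniform_limit_compose_continuous[OF f_cont compact_Icc lim x])
    then have "(\<lambda>n. green_op (\<lambda>s. f s ((Top f ^^ n) x0 s)) t) \<longlonglongrightarrow> green_op (\<lambda>s. f s (x s)) t"
      by (intro green_op_tendsto continuous_on_compose_f continuous_on_Top_funpow x0 x t)
    then have "(\<lambda>n. (Top f ^^ Suc n) x0 t) \<longlonglongrightarrow> Top f x t"
      unfolding funpow.simps comp_def Top_eq_green_op .
    moreover have "(\<lambda>n. (Top f ^^ Suc n) x0 t) \<longlonglongrightarrow> x t"
      using LIMSEQ_Suc[OF tendsto_uniform_limitI[OF lim t]] .
    ultimately show "Top f x t = x t" by (rule LIMSEQ_unique)
  qed
qed

end

locale xi_contractive_bvp = continuous_bvp +
  fixes \<xi> :: "real \<Rightarrow> real \<Rightarrow> real" and \<phi> :: "real \<Rightarrow> real"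
  assumes phi: "\<phi> \<in> PhiClass"
    and f_diff_le: "\<And>a b t. \<xi> a b \<ge> 0 \<Longrightarrow> t \<in> {0..1} \<Longrightarrow> \<bar>f t a - f t b\<bar> \<le> 9 * sqrt 3 * \<phi> \<bar>a - b\<bar>"
    and xi_related_Top: "\<And>x y. continuous_on {0..1} x \<Longrightarrow> continuous_on {0..1} y \<Longrightarrow>
      xi_related \<xi> x y \<Longrightarrow> xi_related \<xi> (Top f x) (Top f y)"
begin

lemma xi_related_Top_funpow:
  "continuous_on {0..1} x \<Longrightarrow> continuous_on {0..1} y \<Longrightarrow> xi_related \<xi> x y \<Longrightarrow>
    xi_related \<xi> ((Top f ^^ n) x) ((Top f ^^ n) y)"
  by (induction n) (simp_all add: xi_related_Top continuous_on_Top_funpow)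

lemma Top_diff_le:
  assumes x: "continuous_on {0..1} x" and y: "continuous_on {0..1} y"
    and bound: "\<And>s. s \<in> {0..1} \<Longrightarrow> \<bar>x s - y s\<bar> \<le> c"
    and xi: "\<And>s. s \<in> {0..1} \<Longrightarrow> \<xi> (x s) (y s) \<ge> 0 \<or> \<xi> (y s) (x s) \<ge> 0"
    and t: "t \<in> {0..1}"
  shows "\<bar>Top f x t - Top f y t\<bar> \<le> \<phi> c"
proof -
  have "\<bar>f s (x s) - f s (y s)\<bar> \<le> 9 * sqrt 3 * \<phi> c" if s: "s \<in> {0..1}" for s
  proof -
    have "\<bar>f s (x s) - f s (y s)\<bar> \<le> 9 * sqrt 3 * \<phi> \<bar>x s - y s\<bar>"
      using xi[OF s] f_diff_le[OF _ s] by (metis abs_minus_commute)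
    also have "\<dots> \<le> 9 * sqrt 3 * \<phi> c"
      using PhiClass_mono[OF phi _ bound[OF s]] by simp
    finally show ?thesis .
  qed
  then have "9 * sqrt 3 * \<bar>green_op (\<lambda>s. f s (x s) - f s (y s)) t\<bar> \<le> 9 * sqrt 3 * \<phi> c"
    by (intro green_op_bound continuous_intros continuous_on_compose_f x y t)
  then show ?thesis
    using green_op_diff[OF continuous_on_compose_f[OF x] continuous_on_compose_f[OF y]]
    by (simp add: Top_eq_green_op)
qed

lemma Top_funpow_diff_le:
  assumes x: "continuous_on {0..1} x" and y: "continuous_on {0..1} y"
    and related: "xi_related \<xi> x y \<or> xi_related \<xi> y x"
  obtains c where "c \<ge> 0"
    "\<And>k t. t \<in> {0..1} \<Longrightarrow> \<bar>(Top f ^^ k) x t - (Top f ^^ k) y t\<bar> \<le> (\<phi> ^^ k) c"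
proof -
  obtain c where c: "\<forall>t\<in>{0..1}. \<bar>x t - y t\<bar> \<le> c"
    using compact_imp_bounded[OF compact_continuous_image[OF continuous_on_diff[OF x y]]]
    by (auto simp: bounded_iff)
  have "\<bar>(Top f ^^ k) x t - (Top f ^^ k) y t\<bar> \<le> (\<phi> ^^ k) c" if "t \<in> {0..1}" for k t
    using that
  proof (induction k arbitrary: t)
    case (Suc k)
    have "xi_related \<xi> ((Top f ^^ k) x) ((Top f ^^ k) y) \<or>
        xi_related \<xi> ((Top f ^^ k) y) ((Top f ^^ k) x)"
      using related xi_related_Top_funpow x y by blast
    then show ?case
      using Suc by (auto intro!: Top_diff_le continuous_on_Top_funpow x y simp: xi_related_def)
  qed (use c in simp)
  moreover have "c \<ge> 0" using c[rule_format, of 0] by simp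
  ultimately show ?thesis using that by blast
qed

lemma fixed_point_exists:
  assumes N: "N \<ge> 1"
    and chain: "\<And>a. \<forall>i\<le>N. \<xi> (a i) (a (Suc i)) \<ge> 0 \<Longrightarrow> \<xi> (a 0) (a (N + 1)) \<ge> 0"
    and x0: "continuous_on {0..1} x0" and x0_related: "xi_related \<xi> x0 (Top f x0)"
  obtains x where "continuous_on {0..1} x" "\<forall>t\<in>{0..1}. Top f x t = x t"
proof -
  define X where "X n = (Top f ^^ n) x0" for n
  have X_Suc: "X (Suc n) = Top f (X n)" for n by (simp add: X_def)
  have X: "continuous_on {0..1} (X n)" for n
    unfolding X_def by (rule continuous_on_Top_funpow[OF x0])
  have related_Suc: "xi_related \<xi> (X n) (X (Suc n))" for n
    using xi_related_Top_funpow[OF x0 continuous_on_Top[OF x0] x0_related, of n]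
    by (simp add: X_def funpow_swap1)
  have related_block: "\<xi> (X a t) (X (a + 1 + k * N) t) \<ge> 0" if "t \<in> {0..1}" for a k t
    using related_along_blocks[of N "\<lambda>u v. \<xi> u v \<ge> 0" "\<lambda>i. X i t"] chain related_Suc that
    by (auto simp: xi_related_def)
  obtain c where "c \<ge> 0" and c0: "\<And>k t. t \<in> {0..1} \<Longrightarrow>
      \<bar>(Top f ^^ k) x0 t - (Top f ^^ k) (Top f x0) t\<bar> \<le> (\<phi> ^^ k) c"
    using Top_funpow_diff_le[OF x0 continuous_on_Top[OF x0] disjI1[OF x0_related]] by blast
  have c: "\<bar>X k t - X (Suc k) t\<bar> \<le> (\<phi> ^^ k) c" if "t \<in> {0..1}" for k t
    using c0[OF that, of k] by (simp add: X_def funpow_swap1)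
  have "uniformly_Cauchy_on {0..1} X"
  proof (rule uniformly_Cauchy_on_if_block_contractive[OF N phi])
    show "(\<lambda>n. (\<phi> ^^ n) c) \<longlonglongrightarrow> 0" by (rule PhiClass_funpow_tendsto_0[OF phi \<open>c \<ge> 0\<close>])
    show "dist (X n t) (X (Suc n) t) \<le> (\<phi> ^^ n) c" if "t \<in> {0..1}" for n t
      using c[OF that] by (simp add: dist_real_def)
    fix k a c'
    assume "\<forall>s\<in>{0..1}. dist (X a s) (X (a + 1 + k * N) s) \<le> c'"
    then show "\<forall>s\<in>{0..1}. dist (X (Suc a) s) (X (a + 2 + k * N) s) \<le> \<phi> c'"
      using Top_diff_le[OF X X _ _] related_block
      by (simp add: X_Suc[symmetric] dist_real_def)
  qed
  then obtain x where "uniform_limit {0..1} (\<lambda>n. (Top f ^^ n) x0) x sequentially"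
    using Cauchy_uniformly_convergent unfolding uniformly_convergent_on_def X_def[abs_def] by blast
  then show ?thesis
    using fixed_point_if_iterates_converge[OF x0] that by blast
qed

lemma fixed_points_unique:
  assumes ends: "z 0 = x" "z n = y" and z: "\<And>i. i \<le> n \<Longrightarrow> continuous_on {0..1} (z i)"
    and links: "\<And>i. i < n \<Longrightarrow> xi_related \<xi> (z i) (z (Suc i)) \<or> xi_related \<xi> (z (Suc i)) (z i)"
    and x: "\<forall>t\<in>{0..1}. Top f x t = x t" and y: "\<forall>t\<in>{0..1}. Top f y t = y t"
    and t: "t \<in> {0..1}"
  shows "x t = y t"
proof -
  have "\<exists>c. i < n \<longrightarrow> c \<ge> 0 \<and> (\<forall>k. \<forall>t\<in>{0..1}.
      \<bar>(Top f ^^ k) (z i) t - (Top f ^^ k) (z (Suc i)) t\<bar> \<le> (\<phi> ^^ k) c)" for i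
  proof (cases "i < n")
    case True
    then show ?thesis
      using Top_funpow_diff_le[OF z z links, of i] by (metis Suc_leI less_imp_le)
  qed simp
  then obtain c where c: "\<And>i k t. i < n \<Longrightarrow> t \<in> {0..1} \<Longrightarrow>
      \<bar>(Top f ^^ k) (z i) t - (Top f ^^ k) (z (Suc i)) t\<bar> \<le> (\<phi> ^^ k) (c i)"
    and c_nonneg: "\<And>i. i < n \<Longrightarrow> c i \<ge> 0"
    using choice[of "\<lambda>i c. i < n \<longrightarrow> c \<ge> 0 \<and> (\<forall>k. \<forall>t\<in>{0..1}.
      \<bar>(Top f ^^ k) (z i) t - (Top f ^^ k) (z (Suc i)) t\<bar> \<le> (\<phi> ^^ k) c)"] by blast
  have "\<bar>x t - y t\<bar> \<le> (\<Sum>i<n. (\<phi> ^^ k) (c i))" for k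
  proof -
    have "x t - y t = (Top f ^^ k) (z 0) t - (Top f ^^ k) (z n) t"
      using Top_funpow_fixed_point[OF x t] Top_funpow_fixed_point[OF y t] ends by simp
    also have "\<dots> = (\<Sum>i<n. (Top f ^^ k) (z i) t - (Top f ^^ k) (z (Suc i)) t)"
      by (rule sum_lessThan_telescope'[symmetric])
    also have "\<bar>\<dots>\<bar> \<le> (\<Sum>i<n. (\<phi> ^^ k) (c i))"
      by (rule order_trans[OF sum_abs sum_mono]) (use c t in auto)
    finally show ?thesis .
  qed
  moreover have "(\<lambda>k. \<Sum>i<n. (\<phi> ^^ k) (c i)) \<longlonglongrightarrow> (\<Sum>i<n. 0)"
    by (intro tendsto_sum PhiClass_funpow_tendsto_0[OF phi]) (simp add: c_nonneg)
  ultimately have "\<bar>x t - y t\<bar> \<le> (\<Sum>i<n. 0)"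
    using LIMSEQ_le_const by blast
  then show ?thesis by simp
qed


lemma bvp_solution_unique:
  assumes connected: "\<And>x y. continuous_on {0..1} x \<Longrightarrow> continuous_on {0..1} y \<Longrightarrow>
      \<exists>(n::nat) (z :: nat \<Rightarrow> real \<Rightarrow> real). z 0 = x \<and> z n = y \<and> (\<forall>i\<le>n. continuous_on {0..1} (z i)) \<and>
        (\<forall>i\<in>{1..n}. xi_related \<xi> (z (i - 1)) (z i) \<or> xi_related \<xi> (z i) (z (i - 1)))"
    and "bvp_solution f x" "bvp_solution f y" and t: "t \<in> {0..1}"
  shows "x t = y t"
proof -
  have x: "continuous_on {0..1} x" "\<forall>t\<in>{0..1}. Top f x t = x t"
    and y: "continuous_on {0..1} y" "\<forall>t\<in>{0..1}. Top f y t = y t"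
    using assms fixed_point_if_bvp_solution by blast+
  obtain n :: nat and z :: "nat \<Rightarrow> real \<Rightarrow> real" where ends: "z 0 = x" "z n = y"
    and z: "\<And>i. i \<le> n \<Longrightarrow> continuous_on {0..1} (z i)"
    and links: "\<forall>i\<in>{1..n}. xi_related \<xi> (z (i - 1)) (z i) \<or> xi_related \<xi> (z i) (z (i - 1))"
    using connected[OF x(1) y(1)] by blast
  have "xi_related \<xi> (z i) (z (Suc i)) \<or> xi_related \<xi> (z (Suc i)) (z i)" if "i < n" for i
    using links[rule_format, of "Suc i"] that by simp
  from fixed_points_unique[OF ends z this x(2) y(2) t] show ?thesis .
qed

end

theorem theorem8:
  fixes f :: "real \<Rightarrow> real \<Rightarrow> real" and \<xi> :: "real \<Rightarrow> real \<Rightarrow> real" and \<phi> :: "real \<Rightarrow> real"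
  assumes f_cont: "continuous_on ({0..1} \<times> UNIV) (\<lambda>(t, u). f t u)"
    and phi: "\<phi> \<in> PhiClass"
    and J1: "\<exists>N::nat. N \<ge> 1 \<and> (\<forall>a :: nat \<Rightarrow> real.
               (\<forall>i\<le>N. \<xi> (a i) (a (Suc i)) \<ge> 0) \<longrightarrow> \<xi> (a 0) (a (N + 1)) \<ge> 0)"
    and J2: "\<forall>a b. \<xi> a b \<ge> 0 \<longrightarrow>
               (\<forall>t\<in>{0..1}. \<bar>f t a - f t b\<bar> \<le> 9 * sqrt 3 * \<phi> \<bar>a - b\<bar>)"
    and J3: "\<forall>x y. continuous_on {0..1} x \<and> continuous_on {0..1} y \<and>
               (\<forall>t\<in>{0..1}. \<xi> (x t) (y t) \<ge> 0) \<longrightarrow>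
               (\<forall>t\<in>{0..1}. \<xi> (Top f x t) (Top f y t) \<ge> 0)"
    and J4: "\<exists>x0. continuous_on {0..1} x0 \<and> (\<forall>t\<in>{0..1}. \<xi> (x0 t) (Top f x0 t) \<ge> 0)"
  shows "(\<exists>x. bvp_solution f x) \<and>
    ((\<forall>x y. continuous_on {0..1} x \<and> continuous_on {0..1} y \<longrightarrow>
        (\<exists>(n::nat) (z :: nat \<Rightarrow> real \<Rightarrow> real). z 0 = x \<and> z n = y \<and>
            (\<forall>i\<le>n. continuous_on {0..1} (z i)) \<and>
            (\<forall>i\<in>{1..n}. (\<forall>t\<in>{0..1}. \<xi> (z (i - 1) t) (z i t) \<ge> 0) \<or>
                         (\<forall>t\<in>{0..1}. \<xi> (z i t) (z (i - 1) t) \<ge> 0))))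
     \<longrightarrow> (\<forall>x y. bvp_solution f x \<and> bvp_solution f y \<longrightarrow> (\<forall>t\<in>{0..1}. x t = y t)))"
proof -
  interpret xi_contractive_bvp f \<xi> \<phi>
    using f_cont phi J2 J3 by unfold_locales (auto simp: xi_related_def)
  obtain N where "N \<ge> 1" and "\<And>a. \<forall>i\<le>N. \<xi> (a i) (a (Suc i)) \<ge> 0 \<Longrightarrow> \<xi> (a 0) (a (N + 1)) \<ge> 0"
    using J1 by blast
  moreover obtain x0 where "continuous_on {0..1} x0" "xi_related \<xi> x0 (Top f x0)"
    using J4 by (auto simp: xi_related_def)
  ultimately obtain x where "continuous_on {0..1} x" "\<forall>t\<in>{0..1}. Top f x t = x t"
    by (rule fixed_point_exists)
  then have "\<exists>x. bvp_solution f x" using bvp_solution_Top by blast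
  then show ?thesis
    using bvp_solution_unique[unfolded xi_related_def] by blast
qed

end
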